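(* Let $G$ be a finite, simple, connected graph and let $k\ge 0$. If $G$ contains a $k$-supported cycle, then $\sigma(G)\ge k$.
   Context: For a spanning tree $T$ of $G$, $\mathrm{Stretch}(G:T)=\max_{uv\in E(G)} d_T(u,v)$, and the stretch of $G$ is $\sigma(G)=\min_T \mathrm{Stretch}(G:T)$, the minimum over all spanning trees $T$ of $G$; $d_G,d_T$ denote graph distances. A cycle $C$ in $G$ is called $k$-supported (for a real number $k$) if $C$ can be partitioned into three edge-disjoint paths $I_1,I_2,I_3$, with $I_1\cap I_2$, $I_2\cap I_3$ and $I_3\cap I_1$ each consisting of exactly one vertex, such that for every triple of vertices $(u_1,u_2,u_3)$ with $u_i\in V(I_i)$ for $i=1,2,3$ we have $\max_{i,j\in\{1,2,3\}} d_G(u_i,u_j)\ge k$. *)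

theory Defs
  imports Main "HOL-Library.Extended_Real"
begin

definition simple_graph :: "'a set \<Rightarrow> 'a set set \<Rightarrow> bool" where
  "simple_graph V E \<longleftrightarrow> finite V \<and>
     (\<forall>e\<in>E. \<exists>u v. e = {u, v} \<and> u \<noteq> v \<and> u \<in> V \<and> v \<in> V)"

definition walk :: "'a set \<Rightarrow> 'a set set \<Rightarrow> 'a list \<Rightarrow> bool" where
  "walk V E p \<longleftrightarrow> p \<noteq> [] \<and> set p \<subseteq> V \<and>
     (\<forall>i. Suc i < length p \<longrightarrow> {p ! i, p ! Suc i} \<in> E)"

definition connected_graph :: "'a set \<Rightarrow> 'a set set \<Rightarrow> bool" where
  "connected_graph V E \<longleftrightarrow> (\<forall>u\<in>V. \<forall>v\<in>V.
     \<exists>p. walk V E p \<and> hd p = u \<and> last p = v)"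

text \<open>Graph distance: least number of edges of a walk from u to v
  (used only for connected graphs, where it exists).\<close>

definition gdist :: "'a set \<Rightarrow> 'a set set \<Rightarrow> 'a \<Rightarrow> 'a \<Rightarrow> nat" where
  "gdist V E u v = (LEAST n. \<exists>p. walk V E p \<and> hd p = u \<and> last p = v \<and> length p = Suc n)"

definition is_cycle :: "'a set \<Rightarrow> 'a set set \<Rightarrow> 'a list \<Rightarrow> bool" where
  "is_cycle V E c \<longleftrightarrow> length c \<ge> 3 \<and> distinct c \<and> walk V E c \<and> {last c, hd c} \<in> E"

definition is_tree :: "'a set \<Rightarrow> 'a set set \<Rightarrow> bool" where
  "is_tree V T \<longleftrightarrow> connected_graph V T \<and> \<not> (\<exists>c. is_cycle V T c)"

definition spanning_tree :: "'a set \<Rightarrow> 'a set set \<Rightarrow> 'a set set \<Rightarrow> bool" where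
  "spanning_tree V E T \<longleftrightarrow> T \<subseteq> E \<and> is_tree V T"

definition stretch :: "'a set \<Rightarrow> 'a set set \<Rightarrow> 'a set set \<Rightarrow> nat" where
  "stretch V E T = Max {gdist V T u v | u v. {u, v} \<in> E}"

definition tree_stretch :: "'a set \<Rightarrow> 'a set set \<Rightarrow> nat" where
  "tree_stretch V E = Min {stretch V E T | T. spanning_tree V E T}"

text \<open>A cycle c = [c_0,...,c_{m-1}] is k-supported if it splits into three
  edge-disjoint arcs I1 = c_0..c_b, I2 = c_b..c_c, I3 = c_c..c_{m-1},c_0
  (0 < b < c < m; every partition of a cycle into three edge-disjoint paths
  pairwise meeting in exactly one vertex is of this form up to rotating the
  cycle list) such that every transversal triple has pairwise G-distance
  maximum at least k.\<close>

definition k_supported :: "'a set \<Rightarrow> 'a set set \<Rightarrow> real \<Rightarrow> 'a list \<Rightarrow> bool" where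
  "k_supported V E k cyc \<longleftrightarrow> is_cycle V E cyc \<and>
     (\<exists>b c. 0 < b \<and> b < c \<and> c < length cyc \<and>
        (let I1 = {cyc ! i | i. i \<le> b};
             I2 = {cyc ! i | i. b \<le> i \<and> i \<le> c};
             I3 = {cyc ! i | i. c \<le> i \<and> i < length cyc} \<union> {cyc ! 0}
         in \<forall>u1\<in>I1. \<forall>u2\<in>I2. \<forall>u3\<in>I3.
              max (max (real (gdist V E u1 u2)) (real (gdist V E u2 u3)))
                  (real (gdist V E u1 u3)) \<ge> k))"

end

theory Submission
  imports Defs
begin

text \<open>Let T be a spanning tree of stretch s and let x, y, z be the three junctions of the
supporting partition. Take a median w of x, y, z in T, i.e. a vertex on all three tree paths
between them. Consecutive vertices of the cycle are adjacent in G, hence at T-distance at most s;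
if two of them were both farther than s/2 from w, the tree path between them would avoid w, so
they would lie in the same component of T - w. Since w separates the ends of each arc, every arc
contains a vertex within s/2 of w, and these three vertices form a transversal triple with
pairwise G-distances at most s. Hence s \<ge> k.\<close>

subsection \<open>Walks\<close>

lemma walk_Cons_Cons:
  "walk V E (a # b # p) \<longleftrightarrow> a \<in> V \<and> {a, b} \<in> E \<and> walk V E (b # p)"
  unfolding walk_def
proof safe
  fix i assume "\<forall>i. Suc i < length (b # p) \<longrightarrow> {(b # p) ! i, (b # p) ! Suc i} \<in> E"
    "{a, b} \<in> E" "Suc i < length (a # b # p)"
  then show "{(a # b # p) ! i, (a # b # p) ! Suc i} \<in> E" by (cases i) auto
qed (force dest: spec[of _ 0] spec[of _ "Suc _"])+

lemma walk_singleton [simp]: "walk V E [a] \<longleftrightarrow> a \<in> V"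
  unfolding walk_def by auto

lemma walk_not_Nil [simp]: "\<not> walk V E []"
  unfolding walk_def by simp

lemma walk_nonempty: "walk V E p \<Longrightarrow> p \<noteq> []"
  by (cases p) auto

lemma walk_edge: "walk V E p \<Longrightarrow> Suc i < length p \<Longrightarrow> {p ! i, p ! Suc i} \<in> E"
  unfolding walk_def by blast

lemma walk_nth_in_vertices: "walk V E p \<Longrightarrow> i < length p \<Longrightarrow> p ! i \<in> V"
  unfolding walk_def by auto

lemma walk_append:
  "walk V E p \<Longrightarrow> walk V E q \<Longrightarrow> {last p, hd q} \<in> E \<Longrightarrow> walk V E (p @ q)"
proof (induction p rule: induct_list012)
  case (2 a)
  then show ?case by (cases q) (auto simp: walk_Cons_Cons)
next
  case (3 a b p)
  then show ?case by (simp add: walk_Cons_Cons)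
qed simp

lemma walk_glue:
  assumes p: "walk V E p" and q: "walk V E q" and pq: "last p = hd q"
  shows "walk V E (p @ tl q)" "hd (p @ tl q) = hd p" "last (p @ tl q) = last q"
    "length (p @ tl q) = length p + length q - 1"
proof -
  obtain x r where q_eq: "q = x # r" using q by (cases q) auto
  show "walk V E (p @ tl q)"
  proof (cases r)
    case (Cons y r')
    then show ?thesis using p q pq q_eq walk_append[of V E p "y # r'"] by (simp add: walk_Cons_Cons)
  qed (use p q_eq in simp)
  show "hd (p @ tl q) = hd p" "last (p @ tl q) = last q"
    "length (p @ tl q) = length p + length q - 1"
    using walk_nonempty[OF p] pq q_eq by auto
qed

lemma walk_rev: "walk V E p \<Longrightarrow> walk V E (rev p)"
proof (induction p rule: induct_list012)
  case (3 a b p)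
  then have "walk V E (rev (b # p))" "{last (rev (b # p)), hd [a]} \<in> E"
    by (auto simp: walk_Cons_Cons insert_commute)
  then show ?case using 3 walk_append[of V E "rev (b # p)" "[a]"] by (simp add: walk_Cons_Cons)
qed simp_all

lemma walk_take: "walk V E p \<Longrightarrow> 0 < n \<Longrightarrow> walk V E (take n p)"
  unfolding walk_def by (auto dest: in_set_takeD)

lemma walk_drop: "walk V E p \<Longrightarrow> n < length p \<Longrightarrow> walk V E (drop n p)"
  unfolding walk_def by (auto dest: in_set_dropD)

lemma walk_tl: "walk V E p \<Longrightarrow> tl p \<noteq> [] \<Longrightarrow> walk V E (tl p)"
  by (cases p) (auto simp: walk_def)

lemma walk_subgraph: "walk V E p \<Longrightarrow> E \<subseteq> E' \<Longrightarrow> walk V E' p"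
  unfolding walk_def by blast

lemma walk_reroute:
  assumes edge_walk: "\<And>a b. {a, b} \<in> E \<Longrightarrow> a \<in> V \<Longrightarrow> b \<in> V \<Longrightarrow>
      \<exists>q. walk V E' q \<and> hd q = a \<and> last q = b"
  shows "walk V E p \<Longrightarrow> \<exists>q. walk V E' q \<and> hd q = hd p \<and> last q = last p"
proof (induction p rule: induct_list012)
  case (2 a)
  then show ?case by (intro exI[of _ "[a]"]) simp
next
  case (3 a b p)
  then obtain q where q: "walk V E' q" "hd q = b" "last q = last (b # p)"
    by (auto simp: walk_Cons_Cons)
  obtain r where r: "walk V E' r" "hd r = a" "last r = b"
    using 3 edge_walk walk_nth_in_vertices[of V E "b # p" 0] by (auto simp: walk_Cons_Cons)
  show ?case using walk_glue[OF r(1) q(1)] q r walk_nonempty[OF r(1)] by (intro exI) auto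
qed simp

subsection \<open>Graph distance\<close>

lemma simple_graph_edge:
  "simple_graph V E \<Longrightarrow> {a, b} \<in> E \<Longrightarrow> a \<in> V \<and> b \<in> V \<and> a \<noteq> b"
  unfolding simple_graph_def by (fastforce simp: doubleton_eq_iff)

lemma simple_graph_finite_edges: "simple_graph V E \<Longrightarrow> finite E"
  unfolding simple_graph_def by (auto intro: finite_subset[of E "Pow V"])

lemma gdist_lt_length:
  assumes "walk V E p" shows "gdist V E (hd p) (last p) < length p"
proof -
  have len: "length p = Suc (length p - 1)" using walk_nonempty[OF assms] by simp
  have "gdist V E (hd p) (last p) \<le> length p - 1"
    unfolding gdist_def using assms len by (intro Least_le) blast
  then show ?thesis using len by linarith
qed

lemma shortest_walk_exists:
  assumes "connected_graph V E" "u \<in> V" "v \<in> V"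
  obtains p where "walk V E p" "hd p = u" "last p = v" "length p = Suc (gdist V E u v)"
proof -
  obtain p where p: "walk V E p" "hd p = u" "last p = v"
    using assms unfolding connected_graph_def by blast
  then have "length p = Suc (length p - 1)" using walk_nonempty by fastforce
  then have "\<exists>n p. walk V E p \<and> hd p = u \<and> last p = v \<and> length p = Suc n" using p by blast
  then have "\<exists>p. walk V E p \<and> hd p = u \<and> last p = v \<and> length p = Suc (gdist V E u v)"
    unfolding gdist_def by (rule LeastI_ex)
  with that show ?thesis by blast
qed

lemma shortest_walk_distinct:
  assumes w: "walk V E p" and len: "length p = Suc (gdist V E (hd p) (last p))"
  shows "distinct p"
proof (rule ccontr)
  assume "\<not> distinct p"
  then obtain i j where ij: "i < j" "j < length p" "p ! i = p ! j"
    by (metis distinct_conv_nth linorder_neqE_nat)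
  let ?p' = "take (Suc i) p @ tl (drop j p)"
  have "last (take (Suc i) p) = hd (drop j p)"
    using ij by (simp add: take_Suc_conv_app_nth hd_drop_conv_nth)
  note shortcut = walk_glue[OF walk_take[OF w] walk_drop[OF w ij(2)] this]
  have "gdist V E (hd p) (last p) < length ?p'"
    using gdist_lt_length[OF shortcut(1)] shortcut(2,3) ij by simp
  moreover have "length ?p' < length p" using shortcut(4) ij by simp
  ultimately show False using len by simp
qed

lemma gdist_self: "u \<in> V \<Longrightarrow> gdist V E u u = 0"
  using gdist_lt_length[of V E "[u]"] by simp

lemma gdist_sym:
  assumes "connected_graph V E" "u \<in> V" "v \<in> V"
  shows "gdist V E u v = gdist V E v u"
proof -
  have le: "gdist V E y x \<le> gdist V E x y" if xy: "x \<in> V" "y \<in> V" for x y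
  proof -
    obtain p where p: "walk V E p" "hd p = x" "last p = y" "length p = Suc (gdist V E x y)"
      using shortest_walk_exists[OF assms(1) xy] .
    show ?thesis using gdist_lt_length[OF walk_rev[OF p(1)]] p walk_nonempty[OF p(1)]
      by (simp add: hd_rev last_rev)
  qed
  show ?thesis using le[of u v] le[of v u] assms by simp
qed

lemma gdist_triangle:
  assumes "connected_graph V E" "u \<in> V" "v \<in> V" "w \<in> V"
  shows "gdist V E u v \<le> gdist V E u w + gdist V E w v"
proof -
  obtain p where p: "walk V E p" "hd p = u" "last p = w" "length p = Suc (gdist V E u w)"
    using shortest_walk_exists[OF assms(1,2,4)] .
  obtain q where q: "walk V E q" "hd q = w" "last q = v" "length q = Suc (gdist V E w v)"
    using shortest_walk_exists[OF assms(1,4,3)] .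
  note pq = walk_glue[OF p(1) q(1)]
  show ?thesis using gdist_lt_length[OF pq(1)] pq(2-4) p q by simp
qed

lemma gdist_subgraph_le:
  assumes "connected_graph V T" "T \<subseteq> E" "u \<in> V" "v \<in> V"
  shows "gdist V E u v \<le> gdist V T u v"
proof -
  obtain p where p: "walk V T p" "hd p = u" "last p = v" "length p = Suc (gdist V T u v)"
    using shortest_walk_exists[OF assms(1,3,4)] .
  show ?thesis using gdist_lt_length[OF walk_subgraph[OF p(1) assms(2)]] p by simp
qed

subsection \<open>Spanning trees and paths in trees\<close>

lemma cycle_walk_avoids_closing_edge:
  assumes "is_cycle V E c" shows "walk V (E - {{last c, hd c}}) c"
proof -
  have len: "3 \<le> length c" and d: "distinct c" and w: "walk V E c"
    using assms unfolding is_cycle_def by auto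
  have "{c ! i, c ! Suc i} \<noteq> {last c, hd c}" if i: "Suc i < length c" for i
  proof
    assume "{c ! i, c ! Suc i} = {last c, hd c}"
    moreover have "c \<noteq> []" using len by auto
    ultimately have "{c ! i, c ! Suc i} = {c ! (length c - 1), c ! 0}"
      by (simp add: last_conv_nth hd_conv_nth)
    then consider "c ! i = c ! (length c - 1)" | "c ! i = c ! 0" "c ! Suc i = c ! (length c - 1)"
      by (auto simp: doubleton_eq_iff)
    then show False
    proof cases
      case 1
      then have "i = length c - 1" using nth_eq_iff_index_eq[OF d, of i "length c - 1"] i by simp
      then show False using i by simp
    next
      case 2
      then have "Suc i = length c - 1"
        using nth_eq_iff_index_eq[OF d, of "Suc i" "length c - 1"] i by simp
      moreover have "i = 0" using 2 nth_eq_iff_index_eq[OF d, of i 0] i len by fastforce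
      ultimately show False using len by simp
    qed
  qed
  then show ?thesis using w unfolding walk_def by blast
qed

lemma connected_remove_cycle_edge:
  assumes conn: "connected_graph V E" and c: "is_cycle V E c"
  shows "connected_graph V (E - {{last c, hd c}})"
  unfolding connected_graph_def
proof (intro ballI)
  fix u v assume "u \<in> V" "v \<in> V"
  then obtain p where p: "walk V E p" "hd p = u" "last p = v"
    using conn unfolding connected_graph_def by blast
  let ?E' = "E - {{last c, hd c}}"
  have cw: "walk V ?E' c" using cycle_walk_avoids_closing_edge[OF c] .
  have "\<exists>q. walk V ?E' q \<and> hd q = a \<and> last q = b"
    if ab: "{a, b} \<in> E" "a \<in> V" "b \<in> V" for a b
  proof (cases "{a, b} = {last c, hd c}")
    case True
    then consider "a = last c" "b = hd c" | "a = hd c" "b = last c"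
      by (auto simp: doubleton_eq_iff)
    then show ?thesis
    proof cases
      case 1
      then show ?thesis using walk_rev[OF cw] walk_nonempty[OF cw]
        by (intro exI[of _ "rev c"]) (simp add: hd_rev last_rev)
    qed (use cw in blast)
  next
    case False
    then show ?thesis using ab by (intro exI[of _ "[a, b]"]) (simp add: walk_Cons_Cons)
  qed
  then show "\<exists>p. walk V ?E' p \<and> hd p = u \<and> last p = v"
    using walk_reroute[OF _ p(1)] p by blast
qed

lemma spanning_tree_exists:
  assumes sg: "simple_graph V E" and conn: "connected_graph V E"
  obtains T where "spanning_tree V E T"
proof -
  obtain T where T: "T \<subseteq> E" "connected_graph V T"
    and min: "\<And>T'. T' \<subseteq> E \<Longrightarrow> connected_graph V T' \<Longrightarrow> card T \<le> card T'"
    using ex_has_least_nat[of "\<lambda>T. T \<subseteq> E \<and> connected_graph V T" E card] conn by blast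
  have "\<not> is_cycle V T c" for c
  proof
    assume c: "is_cycle V T c"
    have "finite T" using T(1) simple_graph_finite_edges[OF sg] finite_subset by blast
    moreover have "{last c, hd c} \<in> T" using c unfolding is_cycle_def by blast
    ultimately have "card (T - {{last c, hd c}}) < card T" by (rule card_Diff1_less)
    then show False using min[of "T - {{last c, hd c}}"] T connected_remove_cycle_edge[OF T(2) c]
      by auto
  qed
  then show ?thesis using that T unfolding spanning_tree_def is_tree_def by blast
qed

lemma is_cycle_append:
  assumes "walk V E A" "walk V E B" "distinct (A @ B)"
    and "{last A, hd B} \<in> E" "{last B, hd A} \<in> E" "3 \<le> length (A @ B)"
  shows "is_cycle V E (A @ B)"
  using assms walk_append[of V E A B] walk_nonempty[of V E A] walk_nonempty[of V E B]
  unfolding is_cycle_def by simp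

lemma cycle_of_fork:
  assumes p: "walk V E (u # p)" "distinct (u # p)" and q: "walk V E (u # q)" "distinct (u # q)"
    and "p \<noteq> []" "q \<noteq> []" and fork: "hd p \<noteq> hd q" and join: "last p = last q"
  obtains c where "is_cycle V E c"
proof -
  have "p ! (length p - 1) = last q" using join \<open>p \<noteq> []\<close> by (simp add: last_conv_nth)
  then have "\<exists>i. i < length p \<and> p ! i \<in> set q"
    using assms by (intro exI[of _ "length p - 1"]) simp
  then obtain i where i: "i < length p" "p ! i \<in> set q"
    and first: "\<And>t. t < i \<Longrightarrow> p ! t \<notin> set q"
    unfolding exists_least_iff[of "\<lambda>i. i < length p \<and> p ! i \<in> set q"] by fastforce
  obtain j where j: "j < length q" "q ! j = p ! i" using i(2) by (metis in_set_conv_nth)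
  let ?A = "take (Suc i) (u # p)" and ?B = "rev (take (Suc j) q)"
  have wq: "walk V E q" using walk_tl[OF q(1)] assms by simp
  have "walk V E ?A" "walk V E ?B" using walk_take[OF p(1), of "Suc i"] walk_rev[OF walk_take[OF wq]] by auto
  moreover have "{last ?A, hd ?B} \<in> E"
  proof -
    have "last ?A = (u # p) ! i" using i by (subst take_Suc_conv_app_nth) auto
    moreover have "hd ?B = (u # p) ! Suc i" using j by (simp add: hd_rev take_Suc_conv_app_nth)
    ultimately show ?thesis using walk_edge[OF p(1), of i] i by simp
  qed
  moreover have "{last ?B, hd ?A} \<in> E"
    using walk_edge[OF q(1), of 0] \<open>q \<noteq> []\<close> by (simp add: last_rev hd_conv_nth insert_commute)
  moreover have "distinct (?A @ ?B)"
  proof -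
    have "set (take i p) \<inter> set q = {}"
      using first i(1) by (fastforce simp: in_set_conv_nth)
    then have "set ?A \<inter> set (take (Suc j) q) = {}" using q(2) by (auto dest: in_set_takeD)
    then show ?thesis using p(2) q(2) by (auto dest: in_set_takeD)
  qed
  moreover have "3 \<le> length (?A @ ?B)"
  proof -
    have "i \<noteq> 0 \<or> j \<noteq> 0" using fork j \<open>p \<noteq> []\<close> \<open>q \<noteq> []\<close>
      by (cases "i = 0"; cases "j = 0") (auto simp: hd_conv_nth)
    then show ?thesis using i j by auto
  qed
  ultimately show ?thesis using that is_cycle_append by blast
qed

lemma acyclic_path_unique:
  assumes acyclic: "\<And>c. \<not> is_cycle V E c"
  shows "walk V E p \<Longrightarrow> distinct p \<Longrightarrow> walk V E q \<Longrightarrow> distinct q \<Longrightarrow>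
    hd p = hd q \<Longrightarrow> last p = last q \<Longrightarrow> p = q"
proof (induction p arbitrary: q)
  case (Cons u p)
  obtain q' where q: "q = u # q'" using Cons.prems(3,5) by (cases q) auto
  show ?case
  proof (cases "p = [] \<or> q' = []")
    case True
    then show ?thesis using Cons.prems(2,4,6) q by (auto simp: last_in_set split: if_splits)
  next
    case False
    show ?thesis
    proof (cases "hd p = hd q'")
      case True
      then have "p = q'"
        using Cons.IH[of q'] Cons.prems False q walk_tl[of V E "u # p"] walk_tl[of V E q] by simp
      then show ?thesis using q by simp
    next
      case fork: False
      obtain c where "is_cycle V E c"
        using cycle_of_fork[of V E u p q'] Cons.prems q False fork by auto
      then show ?thesis using acyclic by blast
    qed
  qed
qed simp

locale tree_graph =
  fixes V :: "'a set" and T :: "'a set set"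
  assumes tree: "is_tree V T"
begin

lemma connected: "connected_graph V T"
  using tree unfolding is_tree_def by blast

lemma acyclic: "\<not> is_cycle V T c"
  using tree unfolding is_tree_def by blast

abbreviation tdist :: "'a \<Rightarrow> 'a \<Rightarrow> nat" where
  "tdist \<equiv> gdist V T"

definition tree_path :: "'a \<Rightarrow> 'a \<Rightarrow> 'a list" where
  "tree_path u v = (THE p. walk V T p \<and> distinct p \<and> hd p = u \<and> last p = v)"

lemma tree_path_eq: "walk V T p \<Longrightarrow> distinct p \<Longrightarrow> tree_path (hd p) (last p) = p"
  unfolding tree_path_def
  by (rule the_equality) (use acyclic_path_unique[OF acyclic] in blast)+

lemma tree_path_spec:
  assumes "u \<in> V" "v \<in> V"
  shows "walk V T (tree_path u v)" "distinct (tree_path u v)"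
    "hd (tree_path u v) = u" "last (tree_path u v) = v"
    "length (tree_path u v) = Suc (tdist u v)"
proof -
  obtain p where p: "walk V T p" "hd p = u" "last p = v" "length p = Suc (tdist u v)"
    using shortest_walk_exists[OF connected assms] .
  moreover have "distinct p" using shortest_walk_distinct[OF p(1)] p by simp
  ultimately have "tree_path u v = p" using tree_path_eq[OF p(1)] by simp
  then show "walk V T (tree_path u v)" "distinct (tree_path u v)"
    "hd (tree_path u v) = u" "last (tree_path u v) = v"
    "length (tree_path u v) = Suc (tdist u v)"
    using p \<open>distinct p\<close> by simp_all
qed

lemma tree_path_in_vertices:
  "u \<in> V \<Longrightarrow> v \<in> V \<Longrightarrow> j < length (tree_path u v) \<Longrightarrow> tree_path u v ! j \<in> V"
  using walk_nth_in_vertices[OF tree_path_spec(1)] .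

lemma tree_path_take:
  assumes "u \<in> V" "v \<in> V" "j < length (tree_path u v)"
  shows "tree_path u (tree_path u v ! j) = take (Suc j) (tree_path u v)"
proof -
  let ?P = "tree_path u v"
  have "hd (take (Suc j) ?P) = u"
    using tree_path_spec(3)[OF assms(1,2)] by (cases ?P) auto
  moreover have "last (take (Suc j) ?P) = ?P ! j"
    using assms(3) by (simp add: take_Suc_conv_app_nth)
  ultimately show ?thesis
    using tree_path_eq[OF walk_take[OF tree_path_spec(1)[OF assms(1,2)]], of "Suc j"]
      tree_path_spec(2)[OF assms(1,2)] by simp
qed

lemma tree_path_drop:
  assumes "u \<in> V" "v \<in> V" "j < length (tree_path u v)"
  shows "tree_path (tree_path u v ! j) v = drop j (tree_path u v)"
  using tree_path_eq[OF walk_drop[OF tree_path_spec(1)[OF assms(1,2)] assms(3)]]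
    tree_path_spec[OF assms(1,2)] assms(3)
  by (simp add: hd_drop_conv_nth)

lemma tree_path_rev:
  assumes "u \<in> V" "v \<in> V"
  shows "tree_path v u = rev (tree_path u v)"
  using tree_path_eq[OF walk_rev[OF tree_path_spec(1)[OF assms]]] tree_path_spec[OF assms]
  by (simp add: hd_rev last_rev)

lemma tdist_sym: "u \<in> V \<Longrightarrow> v \<in> V \<Longrightarrow> tdist u v = tdist v u"
  using gdist_sym[OF connected] .

lemma tdist_triangle:
  "u \<in> V \<Longrightarrow> v \<in> V \<Longrightarrow> w \<in> V \<Longrightarrow> tdist u v \<le> tdist u w + tdist w v"
  using gdist_triangle[OF connected] .

lemma tdist_tree_path_nth:
  assumes "u \<in> V" "v \<in> V" "j < length (tree_path u v)"
  shows "tdist u (tree_path u v ! j) = j" "tdist (tree_path u v ! j) v = tdist u v - j"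
proof -
  have x: "tree_path u v ! j \<in> V" using tree_path_in_vertices[OF assms] .
  show "tdist u (tree_path u v ! j) = j"
    using tree_path_spec(5)[OF assms(1) x] tree_path_take[OF assms] assms(3) by simp
  show "tdist (tree_path u v ! j) v = tdist u v - j"
    using tree_path_spec(5)[OF x assms(2)] tree_path_spec(5)[OF assms(1,2)] tree_path_drop[OF assms] by simp
qed

lemma tree_path_length_ge_2:
  "u \<in> V \<Longrightarrow> v \<in> V \<Longrightarrow> u \<noteq> v \<Longrightarrow> 2 \<le> length (tree_path u v)"
  using tree_path_spec[of u v] by (cases "tree_path u v" rule: remdups_adj.cases) auto

text \<open>For v \<noteq> w, the first step from w towards v: two vertices other than w lie in the same
  component of T - w iff their branches at w coincide.\<close>

definition branch :: "'a \<Rightarrow> 'a \<Rightarrow> 'a" where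
  "branch w v = tree_path w v ! 1"

lemma branch_closer:
  assumes "w \<in> V" "z \<in> V" "w \<noteq> z"
  shows "branch w z \<in> V" "tdist (branch w z) z < tdist w z"
proof -
  have len: "1 < length (tree_path w z)" using tree_path_length_ge_2[OF assms] by simp
  show "branch w z \<in> V" unfolding branch_def using tree_path_in_vertices[OF assms(1,2) len] .
  show "tdist (branch w z) z < tdist w z"
    unfolding branch_def using tdist_tree_path_nth(2)[OF assms(1,2) len] len tree_path_spec(5)[OF assms(1,2)]
    by simp
qed

lemma branch_tree_path_next:
  assumes "x \<in> V" "y \<in> V" "j < length (tree_path x y)" "tree_path x y ! j \<noteq> y"
  shows "Suc j < length (tree_path x y)" "branch (tree_path x y ! j) y = tree_path x y ! Suc j"
proof -
  have "j \<noteq> length (tree_path x y) - 1"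
    using assms tree_path_spec(4)[OF assms(1,2)] walk_nonempty[OF tree_path_spec(1)[OF assms(1,2)]]
    by (auto simp: last_conv_nth)
  then show sj: "Suc j < length (tree_path x y)" using assms(3) by simp
  show "branch (tree_path x y ! j) y = tree_path x y ! Suc j"
    unfolding branch_def using tree_path_drop[OF assms(1-3)] sj by simp
qed

lemma branch_tree_path_prev:
  assumes "x \<in> V" "y \<in> V" "j < length (tree_path x y)" "tree_path x y ! j \<noteq> x"
  shows "0 < j" "branch (tree_path x y ! j) x = tree_path x y ! (j - 1)"
proof -
  show j: "0 < j"
    using assms tree_path_spec(3)[OF assms(1,2)] by (cases j) (auto simp: hd_conv_nth)
  have "tree_path (tree_path x y ! j) x = rev (take (Suc j) (tree_path x y))"
    using tree_path_rev[OF assms(1) tree_path_in_vertices[OF assms(1-3)]] tree_path_take[OF assms(1-3)]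
    by simp
  then show "branch (tree_path x y ! j) x = tree_path x y ! (j - 1)"
    unfolding branch_def using j assms(3) by (simp add: rev_nth)
qed

lemma branch_edge:
  assumes w: "w \<in> V" and a: "a \<in> V" "a' \<in> V" and e: "{a, a'} \<in> T"
    and "a \<noteq> w" "a' \<noteq> w"
  shows "branch w a = branch w a'"
proof -
  let ?P = "tree_path w a"
  have len: "2 \<le> length ?P" using tree_path_length_ge_2 assms by simp
  show ?thesis
  proof (cases "a' \<in> set ?P")
    case False
    have "walk V T (?P @ [a'])"
      using walk_append[OF tree_path_spec(1)[OF w a(1)], of "[a']"] tree_path_spec(4)[OF w a(1)] e a by simp
    moreover have "distinct (?P @ [a'])" using tree_path_spec(2)[OF w a(1)] False by simp
    moreover have "hd (?P @ [a']) = w" using tree_path_spec(3)[OF w a(1)] len by (cases ?P) auto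
    ultimately have "tree_path w a' = ?P @ [a']" using tree_path_eq[of "?P @ [a']"] by simp
    then show ?thesis unfolding branch_def using len by (simp add: nth_append)
  next
    case True
    then obtain j where j: "j < length ?P" "?P ! j = a'" by (auto simp: in_set_conv_nth)
    have "?P ! 0 = w" using tree_path_spec(3)[OF w a(1)] len by (cases ?P) auto
    then have "j \<noteq> 0" using j \<open>a' \<noteq> w\<close> by (cases "j = 0") auto
    then show ?thesis unfolding branch_def using tree_path_take[OF w a(1) j(1)] j by simp
  qed
qed

lemma branch_walk:
  "walk V T q \<Longrightarrow> w \<in> V \<Longrightarrow> w \<notin> set q \<Longrightarrow> branch w (hd q) = branch w (last q)"
proof (induction q rule: induct_list012)
  case (3 a b q)
  have ab: "a \<in> V" "{a, b} \<in> T" "walk V T (b # q)"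
    using "3.prems"(1) by (simp_all add: walk_Cons_Cons)
  have "b \<in> V" using walk_nth_in_vertices[OF ab(3), of 0] by simp
  then have "branch w a = branch w b" using branch_edge[OF "3.prems"(2) ab(1) _ ab(2)] "3.prems"(3) by auto
  also have "\<dots> = branch w (last (b # q))" using "3.IH"(2)[OF ab(3) "3.prems"(2)] "3.prems"(3) by simp
  finally show ?case by simp
qed simp_all

lemma branch_eq_if_far:
  assumes "w \<in> V" "a \<in> V" "a' \<in> V" "tdist a a' \<le> s"
    and "s < 2 * tdist w a" "s < 2 * tdist w a'"
  shows "branch w a = branch w a'"
proof -
  have "w \<notin> set (tree_path a a')"
  proof
    assume "w \<in> set (tree_path a a')"
    then obtain t where t: "t < length (tree_path a a')" "tree_path a a' ! t = w"
      by (auto simp: in_set_conv_nth)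
    then have "tdist a w = t" "tdist w a' = tdist a a' - t"
      using tdist_tree_path_nth[OF assms(2,3) t(1)] by simp_all
    moreover have "t \<le> tdist a a'" using t(1) tree_path_spec(5)[OF assms(2,3)] by simp
    ultimately show False using assms tdist_sym[OF assms(1,2)] by linarith
  qed
  moreover note a_to_a' = tree_path_spec(1,3,4)[OF assms(2,3)]
  ultimately show ?thesis using branch_walk[OF a_to_a'(1) assms(1)] a_to_a'(2,3) by simp
qed

text \<open>Equivalently, w lies on the tree path from x to y.\<close>

definition separates :: "'a \<Rightarrow> 'a \<Rightarrow> 'a \<Rightarrow> bool" where
  "separates w x y \<longleftrightarrow> w = x \<or> w = y \<or> branch w x \<noteq> branch w y"

lemma sequence_near_separator:
  assumes w: "w \<in> V" and f: "\<And>j. f j \<in> V"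
    and steps: "\<And>j. lo \<le> j \<Longrightarrow> j < hi \<Longrightarrow> tdist (f j) (f (Suc j)) \<le> s"
    and "lo \<le> hi" and sep: "separates w (f lo) (f hi)"
  obtains j where "lo \<le> j" "j \<le> hi" "2 * tdist w (f j) \<le> s"
proof -
  have "\<exists>j. lo \<le> j \<and> j \<le> hi \<and> 2 * tdist w (f j) \<le> s"
  proof (rule ccontr)
    assume "\<nexists>j. lo \<le> j \<and> j \<le> hi \<and> 2 * tdist w (f j) \<le> s"
    then have far: "s < 2 * tdist w (f j)" if "lo \<le> j" "j \<le> hi" for j
      using that by (meson not_le)
    have "branch w (f lo) = branch w (f hi)"
      using \<open>lo \<le> hi\<close>
    proof (induction hi rule: dec_induct)
      case (step j)
      have "branch w (f j) = branch w (f (Suc j))"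
        by (rule branch_eq_if_far[OF w f f steps far far]) (use step.hyps in simp_all)
      then show ?case using step.IH by simp
    qed simp
    moreover have "w \<noteq> f j" if "lo \<le> j" "j \<le> hi" for j
    proof
      assume "w = f j"
      then show False using far[OF that] gdist_self[OF w, of T] by simp
    qed
    ultimately show False using sep \<open>lo \<le> hi\<close> unfolding separates_def by simp
  qed
  then show ?thesis using that by blast
qed

lemma median_exists:
  assumes "x \<in> V" "y \<in> V" "z \<in> V"
  obtains w where "w \<in> V" "separates w x y" "separates w y z" "separates w z x"
proof -
  let ?P = "tree_path x y"
  obtain j where j: "j < length ?P"
    and closest: "\<And>i. i < length ?P \<Longrightarrow> tdist (?P ! j) z \<le> tdist (?P ! i) z"
    using ex_has_least_nat[of "\<lambda>j. j < length ?P" 0 "\<lambda>j. tdist (?P ! j) z"]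
      walk_nonempty[OF tree_path_spec(1)[OF assms(1,2)]] by auto
  let ?w = "?P ! j"
  have w: "?w \<in> V" using tree_path_in_vertices[OF assms(1,2) j] .
  note after = branch_tree_path_next[OF assms(1,2) j] and before = branch_tree_path_prev[OF assms(1,2) j]
  have "separates ?w x y"
  proof (cases "?w = x \<or> ?w = y")
    case False
    then have "?P ! Suc j \<noteq> ?P ! (j - 1)"
      using nth_eq_iff_index_eq[OF tree_path_spec(2)[OF assms(1,2)]] after before by fastforce
    then show ?thesis using after before False unfolding separates_def by auto
  qed (auto simp: separates_def)
  moreover have "separates ?w y z"
  proof (rule ccontr)
    assume "\<not> separates ?w y z"
    then have "?w \<noteq> y" "?w \<noteq> z" "branch ?w z = ?P ! Suc j" "Suc j < length ?P"
      using after unfolding separates_def by auto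
    then show False using branch_closer[OF w assms(3)] closest[of "Suc j"] by simp
  qed
  moreover have "separates ?w z x"
  proof (rule ccontr)
    assume "\<not> separates ?w z x"
    then have "?w \<noteq> x" "?w \<noteq> z" "branch ?w z = ?P ! (j - 1)" "0 < j"
      using before unfolding separates_def by auto
    moreover have "j - 1 < length ?P" using j by simp
    ultimately show False using branch_closer[OF w assms(3)] closest[of "j - 1"] by simp
  qed
  ultimately show ?thesis using that w by blast
qed

lemma closed_sequence_near_median:
  assumes f: "\<And>j. f j \<in> V" and steps: "\<And>j. tdist (f j) (f (Suc j)) \<le> s"
    and "b \<le> d" "d \<le> m" and closed: "f m = f 0"
  obtains w j1 j2 j3 where "w \<in> V" "j1 \<le> b" "b \<le> j2" "j2 \<le> d" "d \<le> j3" "j3 \<le> m"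
    "2 * tdist w (f j1) \<le> s" "2 * tdist w (f j2) \<le> s" "2 * tdist w (f j3) \<le> s"
proof -
  obtain w where w: "w \<in> V" "separates w (f 0) (f b)" "separates w (f b) (f d)" "separates w (f d) (f 0)"
    using median_exists[OF f f f] .
  obtain j1 where "j1 \<le> b" "2 * tdist w (f j1) \<le> s"
    using sequence_near_separator[OF w(1) f steps le0 w(2)] by blast
  moreover obtain j2 where "b \<le> j2" "j2 \<le> d" "2 * tdist w (f j2) \<le> s"
    using sequence_near_separator[OF w(1) f steps \<open>b \<le> d\<close> w(3)] by blast
  moreover obtain j3 where "d \<le> j3" "j3 \<le> m" "2 * tdist w (f j3) \<le> s"
    using sequence_near_separator[OF w(1) f steps \<open>d \<le> m\<close> w(4)[folded closed]] by blast
  ultimately show ?thesis using that w(1) by blast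
qed

lemma gdist_le_via_tree:
  assumes "T \<subseteq> E" "x \<in> V" "y \<in> V" "w \<in> V"
  shows "gdist V E x y \<le> tdist w x + tdist w y"
  using gdist_subgraph_le[OF connected assms(1-3)] tdist_triangle[OF assms(2,3,4)]
    tdist_sym[OF assms(2,4)] by simp

end

subsection \<open>Stretch\<close>

lemma stretch_edge_bound:
  assumes "simple_graph V E" "{a, b} \<in> E"
  shows "gdist V T a b \<le> stretch V E T"
proof -
  have "{gdist V T u v | u v. {u, v} \<in> E} \<subseteq> (\<lambda>(u, v). gdist V T u v) ` (V \<times> V)"
    by (force dest: simple_graph_edge[OF assms(1)])
  moreover have "finite V" using assms(1) unfolding simple_graph_def by blast
  ultimately have "finite {gdist V T u v | u v. {u, v} \<in> E}" using finite_subset by blast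
  then show ?thesis unfolding stretch_def using assms(2) by (intro Max_ge) blast+
qed

lemma cycle_edge_mod:
  assumes c: "is_cycle V E c" and j: "j < length c"
  shows "{c ! j, c ! (Suc j mod length c)} \<in> E"
proof (cases "Suc j < length c")
  case True
  then show ?thesis using walk_edge[of V E c j] c unfolding is_cycle_def by simp
next
  case False
  then have "length c = Suc j" "c \<noteq> []" using j by auto
  then have "c ! j = last c" "c ! (Suc j mod length c) = hd c"
    by (simp_all add: last_conv_nth hd_conv_nth)
  then show ?thesis using c unfolding is_cycle_def by simp
qed

lemma stretch_ge_if_supported:
  assumes sg: "simple_graph V E" and T: "spanning_tree V E T" and ks: "k_supported V E k c"
  shows "k \<le> real (stretch V E T)"
proof -
  interpret tree_graph V T using T unfolding spanning_tree_def by unfold_locales blast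
  let ?s = "stretch V E T"
  obtain b d where bd: "0 < b" "b < d" "d < length c"
    and supported: "\<forall>u1\<in>{c ! i | i. i \<le> b}. \<forall>u2\<in>{c ! i | i. b \<le> i \<and> i \<le> d}.
      \<forall>u3\<in>{c ! i | i. d \<le> i \<and> i < length c} \<union> {c ! 0}.
        max (max (real (gdist V E u1 u2)) (real (gdist V E u2 u3))) (real (gdist V E u1 u3)) \<ge> k"
    and cyc: "is_cycle V E c"
    using ks unfolding k_supported_def Let_def by blast
  define m where "m = length c"
  \<comment> \<open>f runs once around the cycle on 0..m, so that the three arcs are f on [0,b], [b,d], [d,m].\<close>
  define f where "f = (\<lambda>j. c ! (j mod m))"
  have m: "0 < m" using bd(3) unfolding m_def by linarith
  have fV: "f j \<in> V" for j
    using walk_nth_in_vertices[of V E c "j mod m"] cyc m unfolding is_cycle_def f_def m_def by simp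
  have steps: "tdist (f j) (f (Suc j)) \<le> ?s" for j
  proof -
    have "f (Suc j) = c ! (Suc (j mod m) mod m)" unfolding f_def by (simp add: mod_Suc_eq)
    then show ?thesis
      using stretch_edge_bound[OF sg cycle_edge_mod[OF cyc, of "j mod m"]] m
      unfolding f_def m_def by simp
  qed
  have f_nth: "f j = c ! j" if "j < m" for j using that unfolding f_def by simp
  have f_period: "f m = f 0" unfolding f_def by simp
  obtain w j1 j2 j3 where w: "w \<in> V" and j: "j1 \<le> b" "b \<le> j2" "j2 \<le> d" "d \<le> j3" "j3 \<le> m"
    and near: "2 * tdist w (f j1) \<le> ?s" "2 * tdist w (f j2) \<le> ?s" "2 * tdist w (f j3) \<le> ?s"
    using closed_sequence_near_median[OF fV steps _ _ f_period] bd m_def by (metis less_imp_le)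
  have "f j1 \<in> {c ! i | i. i \<le> b}" using j bd m_def f_nth[of j1] by auto
  moreover have "f j2 \<in> {c ! i | i. b \<le> i \<and> i \<le> d}" using j bd m_def f_nth[of j2] by auto
  moreover have "f j3 \<in> {c ! i | i. d \<le> i \<and> i < length c} \<union> {c ! 0}"
  proof (cases "j3 = m")
    case True
    then show ?thesis using f_period f_nth[of 0] m by simp
  next
    case False
    then show ?thesis using j f_nth[of j3] m_def by auto
  qed
  ultimately have "k \<le> max (max (real (gdist V E (f j1) (f j2))) (real (gdist V E (f j2) (f j3))))
      (real (gdist V E (f j1) (f j3)))"
    using supported by blast
  moreover have close: "real (gdist V E (f i) (f j)) \<le> real ?s"
    if "2 * tdist w (f i) \<le> ?s" "2 * tdist w (f j) \<le> ?s" for i j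
  proof -
    have "T \<subseteq> E" using T unfolding spanning_tree_def by blast
    then show ?thesis using gdist_le_via_tree[OF _ fV fV w, of E i j] that by simp
  qed
  ultimately show ?thesis
    using close[OF near(1,2)] close[OF near(2,3)] close[OF near(1,3)] by linarith
qed

lemma tree_stretch_attained:
  assumes "simple_graph V E" "connected_graph V E"
  obtains T where "spanning_tree V E T" "tree_stretch V E = stretch V E T"
proof -
  have "{T. spanning_tree V E T} \<subseteq> Pow E" unfolding spanning_tree_def by blast
  then have "finite {T. spanning_tree V E T}"
    using simple_graph_finite_edges[OF assms(1)] finite_subset by blast
  then have "finite {stretch V E T | T. spanning_tree V E T}"
    by (simp add: setcompr_eq_image)
  moreover have "{stretch V E T | T. spanning_tree V E T} \<noteq> {}"
    using spanning_tree_exists[OF assms] by blast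
  ultimately have "tree_stretch V E \<in> {stretch V E T | T. spanning_tree V E T}"
    unfolding tree_stretch_def by (rule Min_in)
  then show ?thesis using that by blast
qed

theorem mainTheorem1:
  fixes V :: "'a set" and E :: "'a set set" and k :: real
  assumes "simple_graph V E"
    and "connected_graph V E"
    and "k \<ge> 0"
    and "\<exists>cyc. k_supported V E k cyc"
  shows "real (tree_stretch V E) \<ge> k"
proof -
  obtain c where c: "k_supported V E k c" using assms(4) by blast
  obtain T where T: "spanning_tree V E T" "tree_stretch V E = stretch V E T"
    using tree_stretch_attained[OF assms(1,2)] .
  show ?thesis using stretch_ge_if_supported[OF assms(1) T(1) c] T(2) by simp
qed

end
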